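(* Let $m\ge3$. Then $\mathcal{H}_2$, viewed as the subgroup of $\mathcal{H}_m$ consisting of the elements that fix every point outside rays $0$ and $1$, is at least quadratically distorted in $\mathcal{H}_m$: there exist elements $\sigma_n\in\mathcal{H}_2$ ($n\in\mathbb{N}$) and constants $c,C>0$ such that the word length of $\sigma_n$ in $\mathcal{H}_2$ is at least $cn^2$ while its word length in $\mathcal{H}_m$ is at most $Cn$ (word lengths with respect to fixed finite generating sets).
   Context: Let $\mathbb{N}=\{1,2,3,\dots\}$, $\mathbb{Z}_n$ the integers modulo $n$, $R_n=\mathbb{Z}_n\times\mathbb{N}$ (ray $i$ is $\{(i,k):k\in\mathbb{N}\}$). The Houghton group $\mathcal{H}_n$ is the group of permutations $\sigma$ of $R_n$ for which there exist $N\ge0$ and integers $t_i$ with $(i,k)\sigma=(i,k+t_i)$ for all $i\in\mathbb{Z}_n$, $k\ge N$ (right actions); $\mathcal{H}_n$ is finitely generated for $n\ge2$. Identifying $R_2$ with the union of rays $0$ and $1$ of $R_m$ embeds $\mathcal{H}_2$ in $\mathcal{H}_m$. *)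

theory Defs
  imports Complex_Main
begin

type_synonym perm_pt = "nat \<times> nat \<Rightarrow> nat \<times> nat"

text \<open>R_n = Z_n x N, with Z_n represented by {0..<n} and N = {1,2,...}.\<close>
definition rays :: "nat \<Rightarrow> (nat \<times> nat) set" where
  "rays n = {(i, k). i < n \<and> 1 \<le> k}"

text \<open>Since R_2 is literally the union of rays 0 and 1 of R_m, H_2 is a subset of H_m.\<close>
definition houghton :: "nat \<Rightarrow> perm_pt set" where
  "houghton n = {\<sigma>. bij \<sigma> \<and> (\<forall>x. x \<notin> rays n \<longrightarrow> \<sigma> x = x) \<and>
     (\<exists>N::nat. \<exists>t::nat \<Rightarrow> int. \<forall>i<n. \<forall>k\<ge>N. \<sigma> (i, k) = (i, nat (int k + t i)))}"

text \<open>Products of words (the order convention is irrelevant for word lengths).\<close>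
definition word_eval :: "perm_pt list \<Rightarrow> perm_pt" where
  "word_eval ws = foldr (\<circ>) ws id"

definition symm_gens :: "perm_pt set \<Rightarrow> perm_pt set" where
  "symm_gens S = S \<union> inv ` S"

definition generates :: "nat \<Rightarrow> perm_pt set \<Rightarrow> bool" where
  "generates n S \<longleftrightarrow> S \<subseteq> houghton n \<and>
     (\<forall>g\<in>houghton n. \<exists>ws. set ws \<subseteq> symm_gens S \<and> word_eval ws = g)"

definition word_length :: "perm_pt set \<Rightarrow> perm_pt \<Rightarrow> nat" where
  "word_length S g = (LEAST k. \<exists>ws. length ws = k \<and> set ws \<subseteq> symm_gens S \<and> word_eval ws = g)"

end

theory Submission imports Defs begin

text \<open>Glue rays 0 and 1 of \<open>R\<^sub>2\<close> into a copy of \<open>\<int>\<close>, ray 0 read backwards. Every element of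
  \<open>\<H>\<^sub>2\<close> is then a permutation of \<open>\<int>\<close> with finitely many inversions, and the number of inversions
  is subadditive, so it is bounded by a constant times the word length in \<open>\<H>\<^sub>2\<close>. Reversing the
  segment \<open>{1..2n}\<close> of ray 0 creates at least \<open>n\<^sup>2\<close> inversions. In \<open>\<H>\<^sub>m\<close> with \<open>m \<ge> 3\<close> the same
  reversal is a product of three translations by \<open>2n\<close> along the lines through two of the
  rays 0, 1, 2, hence has word length \<open>O(n)\<close>.\<close>

definition expressible :: "perm_pt set \<Rightarrow> perm_pt \<Rightarrow> bool" where
  "expressible S g \<longleftrightarrow> (\<exists>ws. set ws \<subseteq> symm_gens S \<and> word_eval ws = g)"

lemma word_eval_Nil: "word_eval [] = id"
  by (simp add: word_eval_def)

lemma word_eval_Cons: "word_eval (w # ws) = w \<circ> word_eval ws"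
  by (simp add: word_eval_def)

lemma word_eval_append: "word_eval (xs @ ys) = word_eval xs \<circ> word_eval ys"
  by (induction xs) (simp_all add: word_eval_Nil word_eval_Cons o_assoc)

lemma word_length_le:
  "set ws \<subseteq> symm_gens S \<Longrightarrow> word_eval ws = g \<Longrightarrow> word_length S g \<le> length ws"
  unfolding word_length_def by (rule Least_le) blast

lemma word_length_witness:
  assumes "expressible S g"
  obtains ws where "length ws = word_length S g" "set ws \<subseteq> symm_gens S" "word_eval ws = g"
proof -
  have "\<exists>k ws. length ws = k \<and> set ws \<subseteq> symm_gens S \<and> word_eval ws = g"
    using assms by (auto simp: expressible_def)
  from LeastI_ex[OF this] show ?thesis
    using that unfolding word_length_def by blast
qed

lemma expressible_generates: "generates n S \<Longrightarrow> g \<in> houghton n \<Longrightarrow> expressible S g"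
  by (auto simp: generates_def expressible_def)

lemma word_length_comp_le:
  assumes "expressible S f" "expressible S g"
  shows "expressible S (f \<circ> g) \<and> word_length S (f \<circ> g) \<le> word_length S f + word_length S g"
proof -
  obtain fs where fs: "length fs = word_length S f" "set fs \<subseteq> symm_gens S" "word_eval fs = f"
    using assms(1) by (rule word_length_witness)
  obtain gs where gs: "length gs = word_length S g" "set gs \<subseteq> symm_gens S" "word_eval gs = g"
    using assms(2) by (rule word_length_witness)
  have fgs: "set (fs @ gs) \<subseteq> symm_gens S" "word_eval (fs @ gs) = f \<circ> g"
    using fs gs by (auto simp: word_eval_append)
  then have "expressible S (f \<circ> g)" unfolding expressible_def by blast
  moreover have "word_length S (f \<circ> g) \<le> length (fs @ gs)" using word_length_le[OF fgs] .
  ultimately show ?thesis using fs(1) gs(1) by simp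
qed

lemma word_length_funpow_le:
  assumes "expressible S g"
  shows "expressible S (g ^^ n) \<and> word_length S (g ^^ n) \<le> n * word_length S g"
proof (induction n)
  case 0
  have nil: "set [] \<subseteq> symm_gens S" "word_eval [] = id" by (simp_all add: word_eval_Nil)
  then have "expressible S id" unfolding expressible_def by (intro exI[of _ "[]"]) simp
  moreover have "word_length S id = 0" using word_length_le[OF nil] by simp
  ultimately show ?case by (simp add: id_def)
next
  case (Suc n)
  have step: "expressible S (g ^^ n \<circ> g) \<and>
      word_length S (g ^^ n \<circ> g) \<le> word_length S (g ^^ n) + word_length S g"
    using word_length_comp_le Suc.IH assms by blast
  have "word_length S (g ^^ n) + word_length S g \<le> Suc n * word_length S g"
    using Suc.IH by simp
  then show ?case unfolding funpow_Suc_right using step by (meson le_trans)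
qed

definition line_coord :: "nat \<times> nat \<Rightarrow> int" where
  "line_coord x = (if fst x = 1 then int (snd x) else 1 - int (snd x))"

definition inversions :: "perm_pt \<Rightarrow> ((nat \<times> nat) \<times> (nat \<times> nat)) set" where
  "inversions g = {(x, y). x \<in> rays 2 \<and> y \<in> rays 2 \<and>
     line_coord x < line_coord y \<and> line_coord (g y) < line_coord (g x)}"

definition line_stable :: "perm_pt \<Rightarrow> bool" where
  "line_stable g \<longleftrightarrow> inj g \<and> (\<forall>x\<in>rays 2. g x \<in> rays 2)"

lemma line_coord_inj_on: "inj_on line_coord (rays 2)"
  by (auto simp: inj_on_def rays_def line_coord_def split: if_splits)

lemma inversions_comp_le:
  assumes "line_stable s" "finite (inversions f)" "finite (inversions s)"
  shows "finite (inversions (f \<circ> s)) \<and>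
    card (inversions (f \<circ> s)) \<le> card (inversions f) + card (inversions s)"
proof -
  let ?h = "\<lambda>(x, y). (s x, s y)"
  let ?A = "inversions (f \<circ> s) \<inter> ?h -` inversions f"
  have split: "inversions (f \<circ> s) \<subseteq> ?A \<union> inversions s"
  proof
    fix p assume p: "p \<in> inversions (f \<circ> s)"
    then obtain x y where xy: "p = (x, y)" "x \<in> rays 2" "y \<in> rays 2" "line_coord x < line_coord y"
      by (auto simp: inversions_def)
    have s: "s x \<in> rays 2" "s y \<in> rays 2" "s x \<noteq> s y"
      using assms(1) xy by (auto simp: line_stable_def dest: injD)
    then have "line_coord (s x) \<noteq> line_coord (s y)"
      using line_coord_inj_on by (auto dest: inj_onD)
    then show "p \<in> ?A \<union> inversions s"
      using p xy s by (auto simp: inversions_def)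
  qed
  have inj: "inj_on ?h ?A"
    using assms(1) by (auto simp: line_stable_def inj_on_def dest: injD)
  have into: "?h ` ?A \<subseteq> inversions f" by auto
  have "finite ?A"
    using inj into assms(2) finite_imageD finite_subset by metis
  moreover have "card ?A \<le> card (inversions f)"
    using card_inj_on_le[OF inj into assms(2)] .
  moreover have "card (inversions (f \<circ> s)) \<le> card ?A + card (inversions s)"
    using card_mono[OF _ split] card_Un_le[of ?A "inversions s"] \<open>finite ?A\<close> assms(3)
    by (meson finite_UnI le_trans)
  ultimately show ?thesis
    using split assms(3) finite_subset by fastforce
qed

lemma word_inversions_le:
  assumes "\<forall>w\<in>set ws. line_stable w \<and> finite (inversions w) \<and> card (inversions w) \<le> K"
  shows "line_stable (word_eval ws) \<and> finite (inversions (word_eval ws)) \<and>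
    card (inversions (word_eval ws)) \<le> K * length ws"
  using assms
proof (induction ws)
  case Nil
  have "inversions (\<lambda>x. x) = {}" by (auto simp: inversions_def)
  then show ?case by (simp add: word_eval_Nil line_stable_def id_def)
next
  case (Cons w ws)
  then have IH: "line_stable (word_eval ws)" "finite (inversions (word_eval ws))"
      "card (inversions (word_eval ws)) \<le> K * length ws"
    and w: "line_stable w" "finite (inversions w)" "card (inversions w) \<le> K"
    by simp_all
  have "line_stable (w \<circ> word_eval ws)"
    using IH(1) w(1) by (auto simp: line_stable_def inj_compose)
  moreover have "finite (inversions (w \<circ> word_eval ws))"
    "card (inversions (w \<circ> word_eval ws)) \<le> card (inversions w) + card (inversions (word_eval ws))"
    using inversions_comp_le[OF IH(1) w(2) IH(2)] by simp_all
  moreover have "card (inversions w) + card (inversions (word_eval ws)) \<le> K * length (w # ws)"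
    using IH(3) w(3) by simp
  ultimately show ?case
    unfolding word_eval_Cons by (blast intro: le_trans)
qed

lemma houghton2_line_stable:
  assumes "g \<in> houghton 2"
  shows "line_stable g \<and> line_stable (inv g)"
proof -
  have bij: "bij g" and fixed: "\<And>x. x \<notin> rays 2 \<Longrightarrow> g x = x"
    using assms by (auto simp: houghton_def)
  have g_rays: "g x \<in> rays 2 \<longleftrightarrow> x \<in> rays 2" for x
    using fixed bij_is_inj[OF bij] by (metis injD)
  have "inv g x \<in> rays 2 \<longleftrightarrow> x \<in> rays 2" for x
    using g_rays[of "inv g x"] bij by (simp add: bij_is_surj surj_f_inv_f)
  moreover have "inj g" "inj (inv g)"
    using bij by (simp_all add: bij_is_inj bij_imp_bij_inv)
  ultimately show ?thesis
    using g_rays by (simp add: line_stable_def)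
qed

lemma houghton2_inversions_finite:
  assumes "g \<in> houghton 2"
  shows "finite (inversions g)"
proof -
  obtain N t where tr: "\<forall>i<2. \<forall>k\<ge>N. g (i, k) = (i, nat (int k + t i))"
    using assms by (auto simp: houghton_def)
  have stable: "line_stable g" using houghton2_line_stable assms by blast
  let ?small = "{0, 1::nat} \<times> {..<N}"
  obtain V where V: "\<forall>x\<in>?small. nat \<bar>line_coord (g x)\<bar> \<le> V"
    using finite_nat_set_iff_bounded_le[of "(\<lambda>x. nat \<bar>line_coord (g x)\<bar>) ` ?small"] by auto
  text \<open>Beyond \<open>N\<close> each ray is translated, so only points within distance \<open>N + V + A\<close> of the origin
    can take part in an inversion.\<close>
  define A where "A = nat \<bar>t 0\<bar> + nat \<bar>t 1\<bar>"
  define R where "R = N + V + A + 1"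
  have far: "(k < N \<and> \<bar>line_coord (g (i, k))\<bar> \<le> int V)
      \<or> (N \<le> k \<and> i = 1 \<and> line_coord (g (i, k)) = int k + t 1 \<and> int k + t 1 \<ge> 1)
      \<or> (N \<le> k \<and> i = 0 \<and> line_coord (g (i, k)) = 1 - (int k + t 0) \<and> int k + t 0 \<ge> 1)"
    if "(i, k) \<in> rays 2" for i k
  proof (cases "k < N")
    case True
    then have "(i, k) \<in> ?small" using that by (auto simp: rays_def)
    then have "nat \<bar>line_coord (g (i, k))\<bar> \<le> V" using V by blast
    then show ?thesis using True by linarith
  next
    case False
    have i: "i = 0 \<or> i = 1" using that by (auto simp: rays_def)
    have e: "g (i, k) = (i, nat (int k + t i))" using tr False i by auto
    have "g (i, k) \<in> rays 2" using stable that by (auto simp: line_stable_def)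
    then have "int k + t i \<ge> 1" using e by (auto simp: rays_def)
    then show ?thesis using False e i by (auto simp: line_coord_def)
  qed
  have "inversions g \<subseteq> ({0, 1} \<times> {..<R}) \<times> ({0, 1} \<times> {..<R})"
  proof
    fix p assume p: "p \<in> inversions g"
    then obtain i k j l where pe: "p = ((i, k), (j, l))" by (cases p) auto
    have r: "(i, k) \<in> rays 2" "(j, l) \<in> rays 2"
      and o: "line_coord (i, k) < line_coord (j, l)" "line_coord (g (j, l)) < line_coord (g (i, k))"
      using p pe by (auto simp: inversions_def)
    have ij: "i = 0 \<or> i = 1" "j = 0 \<or> j = 1" using r by (auto simp: rays_def)
    have "\<bar>t 0\<bar> \<le> int A" "\<bar>t 1\<bar> \<le> int A" by (auto simp: A_def)
    then have "k < R \<and> l < R"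
      using far[OF r(1)] far[OF r(2)] o ij unfolding R_def line_coord_def
      by (auto split: if_splits)
    then show "p \<in> ({0, 1} \<times> {..<R}) \<times> ({0, 1} \<times> {..<R})" using pe ij by auto
  qed
  then show ?thesis by (rule finite_subset) auto
qed

lemma houghton2_inv_inversions_finite:
  assumes "g \<in> houghton 2"
  shows "finite (inversions (inv g))"
proof -
  have g_inv: "g (inv g u) = u" for u
    using assms by (auto simp: houghton_def bij_is_surj surj_f_inv_f)
  have "line_stable (inv g)" using houghton2_line_stable assms by blast
  then have reflect: "(inv g v, inv g u) \<in> inversions g" if "(u, v) \<in> inversions (inv g)" for u v
    using that g_inv by (auto simp: inversions_def line_stable_def)
  have "inversions (inv g) \<subseteq> (\<lambda>(x, y). (g y, g x)) ` inversions g"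
  proof
    fix p assume p: "p \<in> inversions (inv g)"
    obtain u v where uv: "p = (u, v)" by (cases p)
    have "(inv g v, inv g u) \<in> inversions g" using reflect p uv by simp
    moreover have "p = (\<lambda>(x, y). (g y, g x)) (inv g v, inv g u)" using uv g_inv by simp
    ultimately show "p \<in> (\<lambda>(x, y). (g y, g x)) ` inversions g" by (rule rev_image_eqI)
  qed
  then show ?thesis using houghton2_inversions_finite[OF assms] finite_subset by blast
qed

lemma symm_gens_houghton2:
  assumes "S \<subseteq> houghton 2" "h \<in> symm_gens S"
  shows "line_stable h \<and> finite (inversions h)"
  using assms houghton2_line_stable houghton2_inversions_finite houghton2_inv_inversions_finite
  by (auto simp: symm_gens_def)

lemma inversions_le_word_length:
  assumes "finite S" "S \<subseteq> houghton 2"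
  obtains K where "\<And>g. expressible S g \<Longrightarrow> card (inversions g) \<le> K * word_length S g"
proof -
  obtain K where K: "\<forall>h\<in>symm_gens S. card (inversions h) \<le> K"
    using assms(1) finite_nat_set_iff_bounded_le[of "(card \<circ> inversions) ` symm_gens S"]
    by (auto simp: symm_gens_def)
  have "card (inversions g) \<le> K * word_length S g" if g: "expressible S g" for g
  proof -
    obtain ws where ws: "length ws = word_length S g" "set ws \<subseteq> symm_gens S" "word_eval ws = g"
      using g by (rule word_length_witness)
    then have "\<forall>w\<in>set ws. line_stable w \<and> finite (inversions w) \<and> card (inversions w) \<le> K"
      using K symm_gens_houghton2[OF assms(2)] by blast
    then show ?thesis using word_inversions_le[of ws K] ws by simp
  qed
  then show thesis by (rule that)
qed

definition reversal :: "nat \<Rightarrow> perm_pt" where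
  "reversal N x = (if fst x = 0 \<and> 1 \<le> snd x \<and> snd x \<le> N then (0, N + 1 - snd x) else x)"

lemma reversal_in_houghton2: "reversal N \<in> houghton 2"
proof -
  have "bij (reversal N)"
    by (rule o_bij[of "reversal N" "reversal N"]) (auto simp: fun_eq_iff reversal_def)
  moreover have "\<exists>N' t. \<forall>i<2. \<forall>k\<ge>N'. reversal N (i, k) = (i, nat (int k + t i))"
    by (rule exI[of _ "N + 1"], rule exI[of _ "\<lambda>_. 0"]) (auto simp: reversal_def)
  moreover have "\<forall>x. x \<notin> rays 2 \<longrightarrow> reversal N x = x"
    by (auto simp: rays_def reversal_def)
  ultimately show ?thesis
    unfolding houghton_def mem_Collect_eq by blast
qed

lemma reversal_inversions: "n * n \<le> card (inversions (reversal (2 * n)))"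
proof -
  let ?h = "\<lambda>(k::nat, l::nat). ((0::nat, k), (0::nat, l))"
  have sub: "?h ` ({n + 1..2 * n} \<times> {1..n}) \<subseteq> inversions (reversal (2 * n))"
    by (auto simp: inversions_def rays_def line_coord_def reversal_def)
  have "inj_on ?h ({n + 1..2 * n} \<times> {1..n})" by (auto simp: inj_on_def)
  then have "card (?h ` ({n + 1..2 * n} \<times> {1..n})) = n * n"
    by (simp add: card_image card_cartesian_product)
  then show ?thesis
    using card_mono[OF houghton2_inversions_finite[OF reversal_in_houghton2] sub] by simp
qed

text \<open>\<open>ray_shift p q s\<close> translates by \<open>s\<close> along the copy of \<open>\<int>\<close> formed by ray \<open>p\<close> (read backwards)
  and ray \<open>q\<close>, fixing all other points.\<close>

definition ray_coord :: "nat \<Rightarrow> nat \<times> nat \<Rightarrow> int" where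
  "ray_coord q x = (if fst x = q then int (snd x) else 1 - int (snd x))"

definition ray_point :: "nat \<Rightarrow> nat \<Rightarrow> int \<Rightarrow> nat \<times> nat" where
  "ray_point p q z = (if 1 \<le> z then (q, nat z) else (p, nat (1 - z)))"

definition ray_shift :: "nat \<Rightarrow> nat \<Rightarrow> int \<Rightarrow> perm_pt" where
  "ray_shift p q s x =
     (if (fst x = p \<or> fst x = q) \<and> 1 \<le> snd x then ray_point p q (ray_coord q x + s) else x)"

lemma ray_shift_add: "p \<noteq> q \<Longrightarrow> ray_shift p q a \<circ> ray_shift p q b = ray_shift p q (a + b)"
  by (auto simp: fun_eq_iff ray_shift_def ray_point_def ray_coord_def)

lemma ray_shift_0: "p \<noteq> q \<Longrightarrow> ray_shift p q 0 = id"
  by (auto simp: fun_eq_iff ray_shift_def ray_point_def ray_coord_def)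

lemma ray_shift_funpow: "p \<noteq> q \<Longrightarrow> ray_shift p q s ^^ n = ray_shift p q (int n * s)"
  by (induction n) (simp_all add: ray_shift_0 ray_shift_add algebra_simps)

lemma ray_shift_in_houghton:
  assumes "p \<noteq> q" "p < m" "q < m"
  shows "ray_shift p q s \<in> houghton m"
proof -
  have "bij (ray_shift p q s)"
    by (rule o_bij[where g = "ray_shift p q (- s)"]) (simp_all add: ray_shift_add ray_shift_0 assms)
  moreover have "\<forall>x. x \<notin> rays m \<longrightarrow> ray_shift p q s x = x"
    using assms by (auto simp: rays_def ray_shift_def)
  moreover define t where "t i = (if i = q then s else if i = p then - s else 0)" for i
  then have "\<forall>i<m. \<forall>k\<ge>nat \<bar>s\<bar> + 1. ray_shift p q s (i, k) = (i, nat (int k + t i))"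
    using assms by (auto simp: ray_shift_def ray_point_def ray_coord_def)
  ultimately show ?thesis unfolding houghton_def by blast
qed

text \<open>The segment \<open>{1..N}\<close> of ray 0 travels to ray 2, then to ray 1, then back to ray 0, and each
  of the three moves reverses it; all other points are translated back and forth.\<close>

lemma reversal_eq_ray_shifts:
  "reversal N = ray_shift 0 1 (- int N) \<circ> ray_shift 1 2 (- int N) \<circ> ray_shift 0 2 (int N)"
  by (auto simp: fun_eq_iff reversal_def ray_shift_def ray_point_def ray_coord_def)

lemma reversal_word_length_le:
  assumes "m \<ge> 3" "generates m T"
  obtains L where "\<And>n. word_length T (reversal (2 * n)) \<le> L * n"
proof -
  let ?a = "ray_shift 0 1 (- 1)" and ?b = "ray_shift 1 2 (- 1)" and ?c = "ray_shift 0 2 1"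
  have expr: "expressible T ?a" "expressible T ?b" "expressible T ?c"
    using assms ray_shift_in_houghton[of _ _ m] by (auto intro: expressible_generates)
  have "word_length T (reversal (2 * n))
      \<le> 2 * n * (word_length T ?a + word_length T ?b + word_length T ?c)" for n
  proof -
    have "reversal (2 * n) = ?a ^^ (2 * n) \<circ> ?b ^^ (2 * n) \<circ> ?c ^^ (2 * n)"
      by (simp add: reversal_eq_ray_shifts ray_shift_funpow)
    moreover note word_length_funpow_le[OF expr(1), of "2 * n"]
      word_length_funpow_le[OF expr(2), of "2 * n"] word_length_funpow_le[OF expr(3), of "2 * n"]
    moreover note word_length_comp_le[of T "?b ^^ (2 * n)" "?c ^^ (2 * n)"]
      word_length_comp_le[of T "?a ^^ (2 * n)" "?b ^^ (2 * n) \<circ> ?c ^^ (2 * n)"]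
    ultimately show ?thesis
      by (simp add: o_assoc distrib_left)
  qed
  then show ?thesis
    by (intro that[of "2 * (word_length T ?a + word_length T ?b + word_length T ?c)"])
      (simp add: algebra_simps)
qed

theorem mainTheorem8:
  fixes m :: nat and S T :: "perm_pt set"
  assumes "m \<ge> 3"
    and "finite S" and "generates 2 S"
    and "finite T" and "generates m T"
  shows "\<exists>\<sigma> :: nat \<Rightarrow> perm_pt. \<exists>c C :: real. c > 0 \<and> C > 0 \<and>
    (\<forall>n\<ge>1. \<sigma> n \<in> houghton 2 \<and>
       c * real n ^ 2 \<le> real (word_length S (\<sigma> n)) \<and>
       real (word_length T (\<sigma> n)) \<le> C * real n)"
proof -
  obtain K where K: "\<And>g. expressible S g \<Longrightarrow> card (inversions g) \<le> K * word_length S g"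
    using inversions_le_word_length assms(2,3) by (auto simp: generates_def)
  obtain L where L: "\<And>n. word_length T (reversal (2 * n)) \<le> L * n"
    using reversal_word_length_le[OF assms(1,5)] by blast
  define c :: real where "c = 1 / (real K + 1)"
  define C :: real where "C = real L + 1"
  have lower: "c * real n ^ 2 \<le> real (word_length S (reversal (2 * n)))" for n
  proof -
    have "n * n \<le> card (inversions (reversal (2 * n)))" by (rule reversal_inversions)
    also have "\<dots> \<le> K * word_length S (reversal (2 * n))"
      using K expressible_generates[OF assms(3) reversal_in_houghton2] .
    also have "\<dots> \<le> (K + 1) * word_length S (reversal (2 * n))" by simp
    finally have "real n ^ 2 \<le> (real K + 1) * real (word_length S (reversal (2 * n)))"
      unfolding power2_eq_square by (metis of_nat_1 of_nat_add of_nat_mono of_nat_mult)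
    then have "c * real n ^ 2 \<le> c * ((real K + 1) * real (word_length S (reversal (2 * n))))"
      by (rule mult_left_mono) (simp add: c_def)
    then show ?thesis by (simp add: c_def)
  qed
  have upper: "real (word_length T (reversal (2 * n))) \<le> C * real n" for n
    using L[of n] unfolding C_def by (simp add: distrib_right flip: of_nat_mult)
  show ?thesis
  proof (intro exI conjI allI impI)
    fix n :: nat
    show "reversal (2 * n) \<in> houghton 2" by (rule reversal_in_houghton2)
    show "c * real n ^ 2 \<le> real (word_length S (reversal (2 * n)))" by (rule lower)
    show "real (word_length T (reversal (2 * n))) \<le> C * real n" by (rule upper)
  qed (simp_all add: c_def C_def)
qed

end
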